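(* Let $\mathcal A$ be a unital C*-algebra, $\alpha\in\mathrm{Aut}(\mathcal A)$, $\mathscr A=\mathcal A\rtimes_\alpha\mathbb Z$. For any $b\in\mathscr A$ the Fejér approximants satisfy $\lim_{N\to\infty}\|b-b^{(N)}\|=0$. Moreover, if $\partial b\in\mathscr A$ exists, then $\|b-b^{(N)}\|\le\frac{\pi}{\sqrt N}\|\partial b\|+\frac{2}{\sqrt N}\|b\|$.
   Context: Dual action $\eta_k$, $k\in\mathbb T=\mathbb R/2\pi\mathbb Z$ (identified with $[-\pi,\pi)$): $\eta_k(a)=a$ for $a\in\mathcal A$, $\eta_k(u)=e^{ik}u$, $u$ the unitary implementing $\alpha$. $\partial b=\frac{d}{dk}\eta_k(b)|_{k=0}$ (norm derivative). Fejér kernel $F_N(k)=\frac1N\frac{\sin^2(Nk/2)}{\sin^2(k/2)}$; Fejér approximant $b^{(N)}=\int_{-\pi}^{\pi}F_N(k)\eta_k(b)\frac{dk}{2\pi}$. *)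

theory Defs
  imports "HOL-Analysis.Analysis"
begin

text \<open>Fejer kernel F_N(k) = (1/N) sin^2(Nk/2)/sin^2(k/2), with its continuous
  value N at the removable singularities sin(k/2) = 0.\<close>
definition fejer_kernel :: "nat \<Rightarrow> real \<Rightarrow> real" where
  "fejer_kernel N k =
     (if sin (k / 2) = 0 then real N
      else (sin (real N * k / 2))^2 / (real N * (sin (k / 2))^2))"

definition fejer_approx :: "(real \<Rightarrow> 'a \<Rightarrow> 'a::banach) \<Rightarrow> nat \<Rightarrow> 'a \<Rightarrow> 'a" where
  "fejer_approx \<eta> N b =
     integral {-pi..pi} (\<lambda>k. (fejer_kernel N k / (2 * pi)) *\<^sub>R \<eta> k b)"

text \<open>Abstract properties of the dual action of T = R/2piZ on the crossed product:
  a 2pi-periodic one-parameter group of isometric unital algebra automorphisms,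
  strongly (pointwise norm-) continuous.\<close>
definition dual_action :: "(real \<Rightarrow> 'a \<Rightarrow> 'a::{banach,real_normed_algebra_1}) \<Rightarrow> bool" where
  "dual_action \<eta> \<longleftrightarrow>
     (\<forall>k. linear (\<eta> k)) \<and>
     (\<forall>k x. norm (\<eta> k x) = norm x) \<and>
     (\<forall>k x y. \<eta> k (x * y) = \<eta> k x * \<eta> k y) \<and>
     (\<forall>k. \<eta> k 1 = 1) \<and>
     (\<forall>x. \<eta> 0 x = x) \<and>
     (\<forall>k h x. \<eta> (k + h) x = \<eta> k (\<eta> h x)) \<and>
     (\<forall>k x. \<eta> (k + 2 * pi) x = \<eta> k x) \<and>
     (\<forall>x. continuous_on UNIV (\<lambda>k. \<eta> k x))"

end

theory Submission
  imports Defs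
begin

text \<open>Since F_N/(2 pi) is a probability density on [-pi, pi], b - b^(N) is the
  F_N-average of b - eta_k b. Writing F_N as the mean of the Dirichlet kernels
  D_0, ..., D_(N-1) shows that it integrates to 2 pi, and Jordan's inequality
  sin x >= 2x/pi gives F_N(k) k^2 <= pi^2/N. Hence every bound
  norm (eta_k b - b) <= A + B k^2 on [-pi, pi] yields norm (b - b^(N)) <= A + B pi^2/N.
  Continuity of the orbit provides such bounds with A arbitrarily small. If the derivative
  db exists, the orbit is Lipschitz with constant norm db (its derivative eta_k db has that
  norm), and |k| <= delta/2 + k^2/(2 delta) with delta = pi/sqrt N gives the rate
  pi norm db / sqrt N.\<close>

definition dirichlet_kernel :: "nat \<Rightarrow> real \<Rightarrow> real" where
  "dirichlet_kernel m k = 1 + 2 * (\<Sum>j\<in>{1..m}. cos (real j * k))"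

lemma sin_half_mult_dirichlet_kernel:
  "sin (k / 2) * dirichlet_kernel m k = sin ((2 * real m + 1) * k / 2)"
proof (induction m)
  case 0
  then show ?case by (simp add: dirichlet_kernel_def)
next
  case (Suc m)
  have "sin (k / 2) * dirichlet_kernel (Suc m) k
          = sin ((2 * real m + 1) * k / 2) + 2 * (sin (k / 2) * cos (real (Suc m) * k))"
    using Suc by (simp add: dirichlet_kernel_def algebra_simps)
  also have "2 * (sin (k / 2) * cos (real (Suc m) * k))
               = sin (k / 2 + real (Suc m) * k) + sin (k / 2 - real (Suc m) * k)"
    by (simp add: sin_times_cos)
  also have "k / 2 + real (Suc m) * k = (2 * real (Suc m) + 1) * k / 2"
    by (simp add: algebra_simps)
  also have "k / 2 - real (Suc m) * k = - ((2 * real m + 1) * k / 2)"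
    by (simp add: algebra_simps)
  finally show ?case by simp
qed

lemma sin_half_sq_mult_sum_dirichlet_kernel:
  "(sin (k / 2))^2 * (\<Sum>m<N. dirichlet_kernel m k) = (sin (real N * k / 2))^2"
proof (induction N)
  case 0
  then show ?case by simp
next
  case (Suc N)
  have "(sin (k / 2))^2 * (\<Sum>m<Suc N. dirichlet_kernel m k)
          = (sin (real N * k / 2))^2 + sin (k / 2) * (sin (k / 2) * dirichlet_kernel N k)"
    using Suc by (simp add: algebra_simps power2_eq_square)
  also have "sin (k / 2) * (sin (k / 2) * dirichlet_kernel N k)
      = (cos (k / 2 - (2 * real N + 1) * k / 2) - cos (k / 2 + (2 * real N + 1) * k / 2)) / 2"
    by (simp add: sin_half_mult_dirichlet_kernel sin_times_sin)
  also have "k / 2 - (2 * real N + 1) * k / 2 = - (2 * (real N * k / 2))"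
    by (simp add: algebra_simps)
  also have "k / 2 + (2 * real N + 1) * k / 2 = 2 * (real (Suc N) * k / 2)"
    by (simp add: algebra_simps)
  finally show ?case by (simp only: cos_minus cos_double_sin) (simp add: field_simps)
qed

lemma sum_dirichlet_kernel_at_period:
  assumes "sin (k / 2) = 0"
  shows "(\<Sum>m<N. dirichlet_kernel m k) = real N ^ 2"
proof -
  obtain i :: int where i: "k / 2 = of_int i * pi"
    using assms sin_zero_iff_int2 by blast
  have "cos (real j * k) = 1" for j
  proof -
    have "real j * k = 2 * pi * of_int (int j * i)" using i by (simp add: algebra_simps)
    then show ?thesis by (simp only: cos_int_2pin)
  qed
  then have "dirichlet_kernel m k = 2 * real m + 1" for m
    by (simp add: dirichlet_kernel_def)
  then show ?thesis
    by (induction N) (simp_all add: power2_eq_square algebra_simps)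
qed

lemma fejer_kernel_eq_mean_dirichlet_kernel:
  assumes "N \<ge> 1"
  shows "fejer_kernel N = (\<lambda>k. (\<Sum>m<N. dirichlet_kernel m k) / real N)"
proof
  fix k
  show "fejer_kernel N k = (\<Sum>m<N. dirichlet_kernel m k) / real N"
  proof (cases "sin (k / 2) = 0")
    case True
    then show ?thesis
      using assms by (simp add: fejer_kernel_def sum_dirichlet_kernel_at_period power2_eq_square)
  next
    case False
    then have "(\<Sum>m<N. dirichlet_kernel m k) = (sin (real N * k / 2))^2 / (sin (k / 2))^2"
      using sin_half_sq_mult_sum_dirichlet_kernel[of k N] by (simp add: field_simps)
    then show ?thesis
      using False assms by (simp add: fejer_kernel_def field_simps)
  qed
qed

lemma has_integral_cos_multiple:
  assumes "j \<ge> 1"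
  shows "((\<lambda>k. cos (real j * k)) has_integral 0) {-pi..pi}"
proof -
  have "((\<lambda>k. cos (real j * k)) has_integral
          (sin (real j * pi) / real j - sin (real j * (-pi)) / real j)) {-pi..pi}"
  proof (rule fundamental_theorem_of_calculus)
    fix x
    have "((\<lambda>k. sin (real j * k) / real j) has_real_derivative
            cos (real j * x) * real j / real j) (at x)"
      by (auto intro!: derivative_eq_intros)
    then show "((\<lambda>k. sin (real j * k) / real j) has_vector_derivative cos (real j * x))
                 (at x within {-pi..pi})"
      using assms by (simp add: has_real_derivative_iff_has_vector_derivative
                                has_vector_derivative_at_within)
  qed simp
  then show ?thesis by simp
qed

lemma has_integral_dirichlet_kernel:
  "(dirichlet_kernel m has_integral 2 * pi) {-pi..pi}"
proof -
  have "((\<lambda>k. \<Sum>j\<in>{1..m}. cos (real j * k)) has_integral (\<Sum>j\<in>{1..m}. 0)) {-pi..pi}"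
    by (rule has_integral_sum) (simp_all add: has_integral_cos_multiple)
  then have "((\<lambda>k. 2 * (\<Sum>j\<in>{1..m}. cos (real j * k))) has_integral 2 * 0) {-pi..pi}"
    by (intro has_integral_mult_right) simp
  with has_integral_const_real[of "1::real" "-pi" pi]
  have "((\<lambda>k. 1 + 2 * (\<Sum>j\<in>{1..m}. cos (real j * k))) has_integral 2 * pi + 2 * 0) {-pi..pi}"
    by (intro has_integral_add) simp_all
  then show ?thesis
    unfolding dirichlet_kernel_def by simp
qed

lemma has_integral_fejer_kernel:
  assumes "N \<ge> 1"
  shows "(fejer_kernel N has_integral 2 * pi) {-pi..pi}"
proof -
  have "((\<lambda>k. \<Sum>m<N. dirichlet_kernel m k) has_integral (\<Sum>m<N. 2 * pi)) {-pi..pi}"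
    by (rule has_integral_sum) (simp_all add: has_integral_dirichlet_kernel)
  then have "((\<lambda>k. (\<Sum>m<N. dirichlet_kernel m k) / real N) has_integral
               (\<Sum>m<N. 2 * pi) / real N) {-pi..pi}"
    by (rule has_integral_divide)
  then show ?thesis
    using assms by (simp add: fejer_kernel_eq_mean_dirichlet_kernel)
qed

lemma continuous_on_fejer_kernel:
  assumes "N \<ge> 1"
  shows "continuous_on S (fejer_kernel N)"
proof -
  have "continuous_on S (\<lambda>k. (\<Sum>m<N. dirichlet_kernel m k) / real N)"
    using assms unfolding dirichlet_kernel_def by (intro continuous_intros) auto
  then show ?thesis
    using assms by (simp add: fejer_kernel_eq_mean_dirichlet_kernel)
qed

lemma fejer_kernel_nonneg: "fejer_kernel N k \<ge> 0"
  by (simp add: fejer_kernel_def)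

lemma two_div_pi_mult_le_sin:
  assumes "0 \<le> x" "x \<le> pi / 2"
  shows "2 / pi * x \<le> sin x"
proof -
  have "convex_on {0..pi} (\<lambda>x. - sin x)"
  proof (rule convex_on_realI[where f' = "\<lambda>x. - cos x"])
    show "((\<lambda>x. - sin x) has_real_derivative - cos x) (at x)" for x
      by (auto intro!: derivative_eq_intros)
    show "- cos x \<le> - cos y" if "x \<in> {0..pi}" "y \<in> {0..pi}" "x \<le> y" for x y
      using cos_monotone_0_pi_le[of x y] that by auto
  qed simp
  moreover define t where "t = 2 / pi * x"
  moreover have "0 \<le> t" "t \<le> 1"
    using assms by (auto simp: t_def field_simps)
  ultimately have "- sin ((1 - t) *\<^sub>R 0 + t *\<^sub>R (pi / 2)) \<le> (1 - t) * - sin 0 + t * - sin (pi / 2)"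
    by (intro convex_onD) auto
  then show ?thesis by (simp add: t_def)
qed

lemma fejer_kernel_mult_sq_le:
  assumes "N \<ge> 1" "\<bar>k\<bar> \<le> pi"
  shows "fejer_kernel N k * k^2 \<le> pi^2 / real N"
proof (cases "k = 0")
  case True
  then show ?thesis by simp
next
  case False
  have "2 / pi * \<bar>k / 2\<bar> \<le> \<bar>sin (k / 2)\<bar>"
    using two_div_pi_mult_le_sin[of "\<bar>k / 2\<bar>"] assms(2) by (cases "k \<ge> 0") auto
  then have jordan: "\<bar>k\<bar> / pi \<le> \<bar>sin (k / 2)\<bar>" by simp
  have pos: "0 < \<bar>k\<bar> / pi" using False by simp
  with jordan have "sin (k / 2) \<noteq> 0" by auto
  then have "fejer_kernel N k * k^2 = (sin (real N * k / 2))^2 * k^2 / (real N * (sin (k / 2))^2)"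
    by (simp add: fejer_kernel_def)
  also have "\<dots> \<le> 1 * k^2 / (real N * (sin (k / 2))^2)"
    by (intro divide_right_mono mult_right_mono) (auto simp: abs_square_le_1)
  also have "\<dots> \<le> k^2 / (real N * (\<bar>k\<bar> / pi)^2)"
    using assms pos power_mono[OF jordan, of 2]
    by (intro frac_le mult_left_mono mult_pos_pos) auto
  also have "\<dots> = pi^2 / real N"
    using False by (simp add: field_simps power2_eq_square)
  finally show ?thesis .
qed

definition fejer_mean :: "nat \<Rightarrow> (real \<Rightarrow> 'a::real_normed_vector) \<Rightarrow> 'a" where
  "fejer_mean N f = integral {-pi..pi} (\<lambda>k. (fejer_kernel N k / (2 * pi)) *\<^sub>R f k)"

lemma norm_sub_fejer_mean_le:
  fixes f :: "real \<Rightarrow> 'a::banach"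
  assumes N: "N \<ge> 1" and f: "continuous_on {-pi..pi} f" and B: "B \<ge> 0"
    and bound: "\<And>k. k \<in> {-pi..pi} \<Longrightarrow> norm (f k - f 0) \<le> A + B * k^2"
  shows "norm (f 0 - fejer_mean N f) \<le> A + B * pi^2 / real N"
proof -
  define w where "w = (\<lambda>k. fejer_kernel N k / (2 * pi))"
  have w_nonneg: "w k \<ge> 0" for k
    by (simp add: w_def fejer_kernel_nonneg)
  have w_cont: "continuous_on {-pi..pi} w"
    unfolding w_def by (intro continuous_intros continuous_on_fejer_kernel N) simp
  have w_int: "(w has_integral 1) {-pi..pi}"
    using has_integral_divide[OF has_integral_fejer_kernel[OF N], of "2 * pi"]
    by (simp add: w_def)
  have w_sq: "w k * k^2 \<le> pi^2 / (2 * pi * real N)" if "k \<in> {-pi..pi}" for k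
  proof -
    have "fejer_kernel N k * k^2 \<le> pi^2 / real N"
      using that by (intro fejer_kernel_mult_sq_le N) auto
    then show ?thesis by (simp add: w_def field_simps)
  qed
  have const_int: "((\<lambda>k. w k *\<^sub>R f 0) has_integral f 0) {-pi..pi}"
    using has_integral_scaleR_left[OF w_int] by simp
  have f_int: "(\<lambda>k. w k *\<^sub>R f k) integrable_on {-pi..pi}"
    by (intro integrable_continuous_interval continuous_intros w_cont f)
  have "f 0 - fejer_mean N f = integral {-pi..pi} (\<lambda>k. w k *\<^sub>R (f 0 - f k))"
    using const_int f_int
    by (simp add: fejer_mean_def w_def integral_diff has_integral_integrable
                  integral_unique scaleR_diff_right)
  also have "norm \<dots> \<le> integral {-pi..pi} (\<lambda>k. A * w k + B * (w k * k^2))"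
  proof (rule integral_norm_bound_integral)
    show "(\<lambda>k. w k *\<^sub>R (f 0 - f k)) integrable_on {-pi..pi}"
      by (intro integrable_continuous_interval continuous_intros w_cont f)
    show "(\<lambda>k. A * w k + B * (w k * k^2)) integrable_on {-pi..pi}"
      by (intro integrable_continuous_interval continuous_intros w_cont)
    fix k assume "k \<in> {-pi..pi}"
    then have "w k * norm (f k - f 0) \<le> w k * (A + B * k^2)"
      using bound w_nonneg by (intro mult_left_mono)
    then show "norm (w k *\<^sub>R (f 0 - f k)) \<le> A * w k + B * (w k * k^2)"
      using w_nonneg[of k]
      by (simp add: norm_minus_commute algebra_simps flip: scaleR_diff_right)
  qed
  also have "\<dots> \<le> A * 1 + 2 * pi * (B * (pi^2 / (2 * pi * real N)))"
  proof (rule has_integral_le[OF integrable_integral])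
    show "(\<lambda>k. A * w k + B * (w k * k^2)) integrable_on {-pi..pi}"
      by (intro integrable_continuous_interval continuous_intros w_cont)
    show "((\<lambda>k. A * w k + B * (pi^2 / (2 * pi * real N))) has_integral
            A * 1 + 2 * pi * (B * (pi^2 / (2 * pi * real N)))) {-pi..pi}"
      using has_integral_const_real[of "B * (pi^2 / (2 * pi * real N))" "-pi" pi]
      by (intro has_integral_add has_integral_mult_right w_int) simp
    show "A * w k + B * (w k * k^2) \<le> A * w k + B * (pi^2 / (2 * pi * real N))"
      if "k \<in> {-pi..pi}" for k
      using mult_left_mono[OF w_sq[OF that] B] by simp
  qed
  also have "\<dots> = A + B * pi^2 / real N"
    by simp
  finally show ?thesis .
qed

lemma fejer_mean_tendsto:
  fixes f :: "real \<Rightarrow> 'a::banach"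
  assumes f: "continuous_on {-pi..pi} f"
  shows "(\<lambda>N. fejer_mean N f) \<longlonglongrightarrow> f 0"
proof (rule LIMSEQ_I)
  fix e :: real assume "e > 0"
  have "bounded ((\<lambda>k. f k - f 0) ` {-pi..pi})"
    by (intro compact_imp_bounded compact_continuous_image continuous_intros f) simp
  then obtain M where "M > 0" and M: "\<forall>k\<in>{-pi..pi}. norm (f k - f 0) \<le> M"
    by (auto simp: bounded_pos)
  have "0 \<in> {-pi..pi}" by simp
  with f \<open>e > 0\<close> obtain d where "d > 0"
    and near: "\<forall>k\<in>{-pi..pi}. dist k 0 < d \<longrightarrow> dist (f k) (f 0) < e / 2"
    unfolding continuous_on_iff by (meson half_gt_zero)
  define B where "B = M / d^2"
  have "B > 0" using \<open>M > 0\<close> \<open>d > 0\<close> by (simp add: B_def)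
  have bound: "norm (f k - f 0) \<le> e / 2 + B * k^2" if k: "k \<in> {-pi..pi}" for k
  proof (cases "\<bar>k\<bar> < d")
    case True
    then have "norm (f k - f 0) < e / 2"
      using near k by (simp add: dist_norm)
    moreover have "B * k^2 \<ge> 0" using \<open>B > 0\<close> by simp
    ultimately show ?thesis by linarith
  next
    case False
    then have "d^2 \<le> k^2"
      using \<open>d > 0\<close> by (metis abs_le_square_iff abs_of_pos linorder_not_less)
    then have "M \<le> B * k^2"
      using \<open>M > 0\<close> \<open>d > 0\<close> by (simp add: B_def field_simps mult_left_mono)
    then show ?thesis using M k \<open>e > 0\<close> by fastforce
  qed
  obtain n0 :: nat where n0: "B * pi^2 / (e / 2) < real n0"
    using reals_Archimedean2 by blast
  show "\<exists>n0. \<forall>n\<ge>n0. norm (fejer_mean n f - f 0) < e"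
  proof (intro exI allI impI)
    fix n assume n: "n \<ge> Suc n0"
    then have "B * pi^2 / (e / 2) < real n"
      using n0 by linarith
    then have "B * pi^2 < real n * (e / 2)"
      using \<open>e > 0\<close> by (simp add: pos_divide_less_eq)
    with n have "B * pi^2 / real n < e / 2"
      by (simp add: divide_less_eq mult.commute)
    moreover have "norm (f 0 - fejer_mean n f) \<le> e / 2 + B * pi^2 / real n"
      using n \<open>B > 0\<close> by (intro norm_sub_fejer_mean_le f bound) auto
    ultimately have "norm (f 0 - fejer_mean n f) < e"
      by linarith
    then show "norm (fejer_mean n f - f 0) < e"
      by (simp add: norm_minus_commute)
  qed
qed

lemma norm_sub_fejer_mean_le_lipschitz:
  fixes f :: "real \<Rightarrow> 'a::banach"
  assumes N: "N \<ge> 1" and f: "continuous_on {-pi..pi} f"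
    and lipschitz: "\<And>k. k \<in> {-pi..pi} \<Longrightarrow> norm (f k - f 0) \<le> L * \<bar>k\<bar>"
  shows "norm (f 0 - fejer_mean N f) \<le> pi / sqrt (real N) * L"
proof -
  have "norm (f pi - f 0) \<le> L * pi"
    using lipschitz[of pi] by simp
  then have "0 \<le> L * pi"
    using norm_ge_zero order_trans by blast
  then have "L \<ge> 0"
    using pi_gt_zero by (simp add: zero_le_mult_iff)
  define \<delta> where "\<delta> = pi / sqrt (real N)"
  have "\<delta> > 0" using N by (simp add: \<delta>_def)
  have \<delta>_sq: "\<delta>^2 = pi^2 / real N"
    using N by (simp add: \<delta>_def power_divide)
  have quadratic_bound: "norm (f k - f 0) \<le> L * \<delta> / 2 + L / (2 * \<delta>) * k^2"
    if "k \<in> {-pi..pi}" for k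
  proof -
    have "2 * \<delta> * \<bar>k\<bar> \<le> \<delta>^2 + k^2"
      using sum_squares_bound[of \<delta> "\<bar>k\<bar>"] by (simp add: power2_eq_square)
    then have "\<bar>k\<bar> \<le> \<delta> / 2 + k^2 / (2 * \<delta>)"
      using \<open>\<delta> > 0\<close> by (simp add: field_simps power2_eq_square)
    then have "L * \<bar>k\<bar> \<le> L * (\<delta> / 2 + k^2 / (2 * \<delta>))"
      using \<open>L \<ge> 0\<close> by (rule mult_left_mono)
    then show ?thesis
      using lipschitz[OF that] by (simp add: algebra_simps)
  qed
  have "norm (f 0 - fejer_mean N f) \<le> L * \<delta> / 2 + L / (2 * \<delta>) * pi^2 / real N"
    using \<open>L \<ge> 0\<close> \<open>\<delta> > 0\<close> by (intro norm_sub_fejer_mean_le N f quadratic_bound) auto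
  also have "\<dots> = L * \<delta> / 2 + L / (2 * \<delta>) * \<delta>^2"
    by (simp add: \<delta>_sq)
  also have "\<dots> = \<delta> * L"
    using \<open>\<delta> > 0\<close> by (simp add: field_simps power2_eq_square)
  finally show ?thesis by (simp add: \<delta>_def)
qed

lemma dual_action_bounded_linear:
  assumes "dual_action \<eta>"
  shows "bounded_linear (\<eta> k)"
proof -
  have "linear (\<eta> k)" and "\<And>x. norm (\<eta> k x) = norm x"
    using assms by (auto simp: dual_action_def)
  then show ?thesis
    by (intro bounded_linear_intro[where K = 1]) (simp_all add: linear_add linear_scale)
qed

lemma dual_action_orbit_has_vector_derivative:
  assumes \<eta>: "dual_action \<eta>" and db: "((\<lambda>k. \<eta> k b) has_vector_derivative db) (at 0)"
  shows "((\<lambda>k. \<eta> k b) has_vector_derivative \<eta> x db) (at x)"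
proof -
  have shift: "((\<lambda>k. k - x) has_vector_derivative 1) (at x)"
    by (auto intro!: derivative_eq_intros simp: has_real_derivative_iff_has_vector_derivative [symmetric])
  have "(((\<lambda>k. \<eta> k b) \<circ> (\<lambda>k. k - x)) has_vector_derivative 1 *\<^sub>R db) (at x)"
    using db by (intro vector_diff_chain_at[OF shift]) simp
  then have "((\<lambda>k. \<eta> x (\<eta> (k - x) b)) has_vector_derivative \<eta> x db) (at x)"
    using bounded_linear.has_vector_derivative[OF dual_action_bounded_linear[OF \<eta>]]
    by (simp add: comp_def)
  moreover have "\<eta> x (\<eta> (k - x) b) = \<eta> k b" for k
    using \<eta> unfolding dual_action_def by (metis add.commute diff_add_cancel)
  ultimately show ?thesis by simp
qed

lemma dual_action_orbit_lipschitz: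
  assumes \<eta>: "dual_action \<eta>" and db: "((\<lambda>k. \<eta> k b) has_vector_derivative db) (at 0)"
  shows "norm (\<eta> k b - b) \<le> norm db * \<bar>k\<bar>"
proof -
  have "norm (\<eta> k b - \<eta> 0 b) \<le> norm db * norm (k - 0)"
  proof (rule differentiable_bound[where S = UNIV and f' = "\<lambda>x h. h *\<^sub>R \<eta> x db"])
    show "((\<lambda>k. \<eta> k b) has_derivative (\<lambda>h. h *\<^sub>R \<eta> x db)) (at x within UNIV)" for x
      using dual_action_orbit_has_vector_derivative[OF \<eta> db, of x]
      by (simp add: has_vector_derivative_def)
    show "onorm (\<lambda>h. h *\<^sub>R \<eta> x db) \<le> norm db" for x
      using \<eta> by (simp add: onorm_scaleR_left onorm_id dual_action_def)
  qed auto
  then show ?thesis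
    using \<eta> by (simp add: dual_action_def)
qed

lemma fejer_approx_eq_fejer_mean: "fejer_approx \<eta> N b = fejer_mean N (\<lambda>k. \<eta> k b)"
  by (simp add: fejer_approx_def fejer_mean_def)

theorem lemma16:
  fixes \<eta> :: "real \<Rightarrow> 'a \<Rightarrow> 'a::{banach,real_normed_algebra_1}"
    and b :: 'a
  assumes "dual_action \<eta>"
  shows "(\<lambda>N. norm (b - fejer_approx \<eta> N b)) \<longlonglongrightarrow> 0 \<and>
         (\<forall>db. ((\<lambda>k. \<eta> k b) has_vector_derivative db) (at 0) \<longrightarrow>
            (\<forall>N::nat. N \<ge> 1 \<longrightarrow>
               norm (b - fejer_approx \<eta> N b)
                 \<le> pi / sqrt (real N) * norm db + 2 / sqrt (real N) * norm b))"
proof (intro conjI allI impI)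
  have orbit: "continuous_on {-pi..pi} (\<lambda>k. \<eta> k b)" and "\<eta> 0 b = b"
    using assms by (auto simp: dual_action_def intro: continuous_on_subset)
  then have "(\<lambda>N. fejer_approx \<eta> N b - b) \<longlonglongrightarrow> 0"
    using fejer_mean_tendsto[OF orbit] by (simp add: fejer_approx_eq_fejer_mean LIM_zero)
  then have "(\<lambda>N. norm (fejer_approx \<eta> N b - b)) \<longlonglongrightarrow> 0"
    by (rule tendsto_norm_zero)
  then show "(\<lambda>N. norm (b - fejer_approx \<eta> N b)) \<longlonglongrightarrow> 0"
    by (simp add: norm_minus_commute)
  fix db and N :: nat
  assume db: "((\<lambda>k. \<eta> k b) has_vector_derivative db) (at 0)" and "N \<ge> 1"
  then have "norm (b - fejer_approx \<eta> N b) \<le> pi / sqrt (real N) * norm db"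
    using norm_sub_fejer_mean_le_lipschitz[OF \<open>N \<ge> 1\<close> orbit]
          dual_action_orbit_lipschitz[OF assms db] \<open>\<eta> 0 b = b\<close>
    by (simp add: fejer_approx_eq_fejer_mean)
  then show "norm (b - fejer_approx \<eta> N b)
               \<le> pi / sqrt (real N) * norm db + 2 / sqrt (real N) * norm b"
    by (simp add: add_increasing2)
qed

end
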